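(* Let $S$ be an inverse semigroup, regarded as an algebraic structure in the language $\mathcal{L}=\{\cdot,{}^{-1}\}\cup\{s\mid s\in S\}$. If $S$ is an equational domain in the language $\mathcal{L}$, then $S$ is a group.
   Context: A semigroup $S$ is inverse if for every $s\in S$ there is a unique $s^{-1}\in S$ with $ss^{-1}s=s$ and $s^{-1}ss^{-1}=s^{-1}$. The language $\mathcal{L}$ consists of multiplication, the unary operation $s\mapsto s^{-1}$, and a constant symbol for every element of $S$ (interpreted as that element). For a finite set of variables $X=\{x_1,\dots,x_n\}$, a term of $\mathcal{L}$ is a finite product of variables raised to integer powers (negative powers meaning powers of the inverse) and constants from $S$. An equation is an equality $t(X)=s(X)$ of two terms; a system of equations is an arbitrary (possibly infinite) set of equations in $x_1,\dots,x_n$. The solution set in $S$ of a system $\mathbf{S}$ is the set of tuples in $S^n$ satisfying all its equations. A set $Y\subseteq S^n$ is algebraic over $S$ if it is the solution set of some system of equations in $x_1,\dots,x_n$. $S$ is an equational domain (in $\mathcal{L}$) if for every $n$, every finite union $Y_1\cup\dots\cup Y_k$ of algebraic sets $Y_i\subseteq S^n$ is algebraic. *)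

theory Defs
  imports Main
begin

text \<open>Terms of the language L = {mult, inv} plus a constant for every element of S.
  Variables are indexed by natural numbers; Var i stands for x_(i+1).\<close>
datatype 'a sterm = Var nat | Const 'a | Mul "'a sterm" "'a sterm" | Inv "'a sterm"

fun term_vars :: "'a sterm \<Rightarrow> nat set" where
  "term_vars (Var i) = {i}"
| "term_vars (Const c) = {}"
| "term_vars (Mul t u) = term_vars t \<union> term_vars u"
| "term_vars (Inv t) = term_vars t"

fun eval_term :: "('a \<Rightarrow> 'a \<Rightarrow> 'a) \<Rightarrow> ('a \<Rightarrow> 'a) \<Rightarrow> 'a list \<Rightarrow> 'a sterm \<Rightarrow> 'a" where
  "eval_term m iv p (Var i) = p ! i"
| "eval_term m iv p (Const c) = c"
| "eval_term m iv p (Mul t u) = m (eval_term m iv p t) (eval_term m iv p u)"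
| "eval_term m iv p (Inv t) = iv (eval_term m iv p t)"

definition inverse_semigroup :: "('a \<Rightarrow> 'a \<Rightarrow> 'a) \<Rightarrow> ('a \<Rightarrow> 'a) \<Rightarrow> bool" where
  "inverse_semigroup m iv \<longleftrightarrow>
     (\<forall>x y z. m (m x y) z = m x (m y z)) \<and>
     (\<forall>s. m (m s (iv s)) s = s \<and> m (m (iv s) s) (iv s) = iv s) \<and>
     (\<forall>s t. m (m s t) s = s \<and> m (m t s) t = t \<longrightarrow> t = iv s)"

definition solution_set :: "('a \<Rightarrow> 'a \<Rightarrow> 'a) \<Rightarrow> ('a \<Rightarrow> 'a) \<Rightarrow> nat \<Rightarrow> ('a sterm \<times> 'a sterm) set \<Rightarrow> 'a list set" where
  "solution_set m iv n E =
     {p. length p = n \<and> (\<forall>(t, u) \<in> E. eval_term m iv p t = eval_term m iv p u)}"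

definition algebraic_set :: "('a \<Rightarrow> 'a \<Rightarrow> 'a) \<Rightarrow> ('a \<Rightarrow> 'a) \<Rightarrow> nat \<Rightarrow> 'a list set \<Rightarrow> bool" where
  "algebraic_set m iv n Y \<longleftrightarrow>
     (\<exists>E. (\<forall>(t, u) \<in> E. term_vars t \<subseteq> {..<n} \<and> term_vars u \<subseteq> {..<n}) \<and>
          Y = solution_set m iv n E)"

definition equational_domain :: "('a \<Rightarrow> 'a \<Rightarrow> 'a) \<Rightarrow> ('a \<Rightarrow> 'a) \<Rightarrow> bool" where
  "equational_domain m iv \<longleftrightarrow>
     (\<forall>n \<YY>. finite \<YY> \<and> \<YY> \<noteq> {} \<and> (\<forall>Y \<in> \<YY>. algebraic_set m iv n Y)
            \<longrightarrow> algebraic_set m iv n (\<Union>\<YY>))"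

definition is_group :: "('a \<Rightarrow> 'a \<Rightarrow> 'a) \<Rightarrow> bool" where
  "is_group m \<longleftrightarrow>
     (\<forall>x y z. m (m x y) z = m x (m y z)) \<and>
     (\<exists>e. \<forall>x. m e x = x \<and> m x e = x \<and> (\<exists>y. m x y = e \<and> m y x = e))"

end

theory Submission
  imports Defs
begin

text \<open>If an inverse semigroup is not a group, it has idempotents \<open>f < e\<close>, i.e. \<open>e f = f \<noteq> e\<close>.
  Every term \<open>t(x\<^sub>1, x\<^sub>2)\<close> then satisfies \<open>t(f,f) = t(e,f) \<cdot> t(f,e)\<inverse> t(f,e)\<close>: writing
  \<open>t(e,f) = t(e,e) \<alpha>\<close> and \<open>t(f,e) = t(e,e) \<beta>\<close> with idempotents \<open>\<alpha>, \<beta>\<close>, one finds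
  \<open>t(f,f) = t(e,e) \<alpha> \<beta>\<close>, since idempotents commute and can be moved across any element by
  conjugation. Hence every equation satisfied by \<open>(e,f)\<close> and \<open>(f,e)\<close> is satisfied by \<open>(f,f)\<close>, so
  the union of the algebraic sets \<open>{x\<^sub>1 = e}\<close> and \<open>{x\<^sub>2 = e}\<close> is not algebraic.\<close>

locale inv_semigroup =
  fixes m :: "'a \<Rightarrow> 'a \<Rightarrow> 'a" (infixl "\<odot>" 70) and iv :: "'a \<Rightarrow> 'a"
  assumes inverse_semigroup: "inverse_semigroup m iv"
begin

abbreviation idem :: "'a \<Rightarrow> bool" where
  "idem x \<equiv> x \<odot> x = x"

abbreviation eval :: "'a list \<Rightarrow> 'a sterm \<Rightarrow> 'a" where
  "eval p t \<equiv> eval_term m iv p t"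

lemma assoc [simp]: "x \<odot> y \<odot> z = x \<odot> (y \<odot> z)"
  using inverse_semigroup unfolding inverse_semigroup_def by blast

lemma mult_inv_mult [simp]: "s \<odot> (iv s \<odot> s) = s"
  using inverse_semigroup unfolding inverse_semigroup_def by simp

lemma inv_mult_inv [simp]: "iv s \<odot> (s \<odot> iv s) = iv s"
  using inverse_semigroup unfolding inverse_semigroup_def by simp

lemma mult_inv_mult_left [simp]: "s \<odot> (iv s \<odot> (s \<odot> x)) = s \<odot> x"
  by (metis assoc mult_inv_mult)

lemma inv_mult_inv_left [simp]: "iv s \<odot> (s \<odot> (iv s \<odot> x)) = iv s \<odot> x"
  by (metis assoc inv_mult_inv)

lemma idem_left: "idem a \<Longrightarrow> a \<odot> (a \<odot> x) = a \<odot> x"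
  by (metis assoc)

lemma inverse_unique: "s \<odot> (t \<odot> s) = s \<Longrightarrow> t \<odot> (s \<odot> t) = t \<Longrightarrow> t = iv s"
  using inverse_semigroup unfolding inverse_semigroup_def by simp

lemma inv_inv [simp]: "iv (iv s) = s"
  by (rule inverse_unique[symmetric]) simp_all

lemma inv_idem: "idem e \<Longrightarrow> iv e = e"
  by (rule inverse_unique[symmetric]) (simp_all add: idem_left)

lemma idem_mult_inv: "idem (s \<odot> iv s)"
  by simp

lemma idem_inv_mult: "idem (iv s \<odot> s)"
  by simp

text \<open>With \<open>x = (e f)\<inverse>\<close>, the element \<open>f x e\<close> is also an inverse of \<open>e f\<close> and idempotent, so \<open>x\<close> is
  idempotent, hence equal to its own inverse \<open>e f\<close>.\<close>
lemma idem_mult: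
  assumes e: "idem e" and f: "idem f"
  shows "idem (e \<odot> f)"
proof -
  define x where "x = iv (e \<odot> f)"
  have x_inv: "x \<odot> (e \<odot> (f \<odot> (x \<odot> z))) = x \<odot> z" for z
    unfolding x_def using inv_mult_inv_left[of "e \<odot> f" z] by simp
  define y where "y = f \<odot> (x \<odot> e)"
  have "e \<odot> (f \<odot> (x \<odot> (e \<odot> f))) = e \<odot> f"
    unfolding x_def using mult_inv_mult[of "e \<odot> f"] by (simp del: mult_inv_mult mult_inv_mult_left)
  then have "e \<odot> f \<odot> (y \<odot> (e \<odot> f)) = e \<odot> f"
    unfolding y_def by (simp add: idem_left[OF e] idem_left[OF f])
  moreover have "y \<odot> (e \<odot> f \<odot> y) = y"
    unfolding y_def by (simp only: assoc idem_left[OF e] idem_left[OF f] x_inv)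
  ultimately have "y = x"
    unfolding x_def by (rule inverse_unique)
  moreover have "idem y"
    unfolding y_def using x_inv by simp
  ultimately have "iv x = x"
    using inv_idem by blast
  then have "e \<odot> f = x"
    unfolding x_def by (metis inv_inv)
  with \<open>idem y\<close> \<open>y = x\<close> show ?thesis by simp
qed

lemma idem_commute:
  assumes e: "idem e" and f: "idem f"
  shows "e \<odot> f = f \<odot> e"
proof -
  have ef: "idem (e \<odot> f)" and fe: "idem (f \<odot> e)"
    using idem_mult e f by blast+
  have "e \<odot> f \<odot> (f \<odot> e \<odot> (e \<odot> f)) = e \<odot> f"
    using ef by (simp add: idem_left[OF e] idem_left[OF f])
  moreover have "f \<odot> e \<odot> (e \<odot> f \<odot> (f \<odot> e)) = f \<odot> e"
    using fe by (simp add: idem_left[OF e] idem_left[OF f])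
  ultimately have "f \<odot> e = iv (e \<odot> f)"
    by (rule inverse_unique)
  also have "\<dots> = e \<odot> f"
    using ef by (rule inv_idem)
  finally show ?thesis by simp
qed

lemma idem_commute_left: "idem a \<Longrightarrow> idem b \<Longrightarrow> a \<odot> (b \<odot> x) = b \<odot> (a \<odot> x)"
  by (metis assoc idem_commute)

lemma inv_mult: "iv (a \<odot> b) = iv b \<odot> iv a"
proof (rule inverse_unique[symmetric])
  have comm: "b \<odot> (iv b \<odot> (iv a \<odot> (a \<odot> x))) = iv a \<odot> (a \<odot> (b \<odot> (iv b \<odot> x)))" for x
    using idem_commute_left[OF idem_mult_inv idem_inv_mult] by simp
  show "a \<odot> b \<odot> (iv b \<odot> iv a \<odot> (a \<odot> b)) = a \<odot> b"
    using comm[of b] by simp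
  show "iv b \<odot> iv a \<odot> (a \<odot> b \<odot> (iv b \<odot> iv a)) = iv b \<odot> iv a"
    using comm[of "iv a"] by simp
qed

definition conjugate :: "'a \<Rightarrow> 'a \<Rightarrow> 'a" where
  "conjugate p a = iv p \<odot> (a \<odot> p)"

lemma idem_commute_mult_inv_left: "idem a \<Longrightarrow> a \<odot> (p \<odot> (iv p \<odot> x)) = p \<odot> (iv p \<odot> (a \<odot> x))"
  using idem_commute_left[OF _ idem_mult_inv] by simp

lemma idem_mult_conjugate: "idem a \<Longrightarrow> a \<odot> p = p \<odot> conjugate p a"
  unfolding conjugate_def by (simp flip: idem_commute_mult_inv_left)

lemma conjugate_mult: "idem a \<Longrightarrow> conjugate p a \<odot> conjugate p b = conjugate p (a \<odot> b)"
  unfolding conjugate_def by (simp add: idem_commute_mult_inv_left)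

lemma idem_conjugate: "idem a \<Longrightarrow> idem (conjugate p a)"
  by (simp only: conjugate_mult)

abbreviation idem_scaled_points ::
    "nat set \<Rightarrow> (nat \<Rightarrow> 'a) \<Rightarrow> (nat \<Rightarrow> 'a) \<Rightarrow> 'a list \<Rightarrow> 'a list \<Rightarrow> 'a list \<Rightarrow> 'a list \<Rightarrow> bool" where
  "idem_scaled_points V a b p pa pb pab \<equiv> \<forall>i \<in> V. idem (a i) \<and> idem (b i) \<and>
     pa ! i = p ! i \<odot> a i \<and> pb ! i = p ! i \<odot> b i \<and> pab ! i = p ! i \<odot> (a i \<odot> b i)"

lemma eval_term_right_idem_factors:
  assumes "term_vars t \<subseteq> V"
    and coords: "idem_scaled_points V a b p pa pb pab"
  shows "\<exists>\<alpha> \<beta>. idem \<alpha> \<and> idem \<beta> \<and> eval pa t = eval p t \<odot> \<alpha> \<and>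
    eval pb t = eval p t \<odot> \<beta> \<and> eval pab t = eval p t \<odot> (\<alpha> \<odot> \<beta>)"
  using assms(1)
proof (induction t)
  case (Var i)
  with coords show ?case by auto
next
  case (Const c)
  show ?case
    by (intro exI[of _ "iv c \<odot> c"]) simp
next
  case (Mul t u)
  then obtain \<alpha>\<^sub>1 \<beta>\<^sub>1 \<alpha>\<^sub>2 \<beta>\<^sub>2 where t: "idem \<alpha>\<^sub>1" "idem \<beta>\<^sub>1" "eval pa t = eval p t \<odot> \<alpha>\<^sub>1"
      "eval pb t = eval p t \<odot> \<beta>\<^sub>1" "eval pab t = eval p t \<odot> (\<alpha>\<^sub>1 \<odot> \<beta>\<^sub>1)"
    and u: "idem \<alpha>\<^sub>2" "idem \<beta>\<^sub>2" "eval pa u = eval p u \<odot> \<alpha>\<^sub>2"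
      "eval pb u = eval p u \<odot> \<beta>\<^sub>2" "eval pab u = eval p u \<odot> (\<alpha>\<^sub>2 \<odot> \<beta>\<^sub>2)"
    by auto
  define P where "P = eval p u"
  define \<gamma> where "\<gamma> = conjugate P \<alpha>\<^sub>1"
  define \<delta> where "\<delta> = conjugate P \<beta>\<^sub>1"
  have \<gamma>: "idem \<gamma>" and \<delta>: "idem \<delta>"
    unfolding \<gamma>_def \<delta>_def using idem_conjugate t(1,2) by blast+
  have move_\<alpha>: "\<alpha>\<^sub>1 \<odot> (P \<odot> z) = P \<odot> (\<gamma> \<odot> z)" for z
    using idem_mult_conjugate[OF t(1), of P] unfolding \<gamma>_def by (metis assoc)
  have move_\<beta>: "\<beta>\<^sub>1 \<odot> (P \<odot> z) = P \<odot> (\<delta> \<odot> z)" for z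
    using idem_mult_conjugate[OF t(2), of P] unfolding \<delta>_def by (metis assoc)
  have "idem (\<gamma> \<odot> \<alpha>\<^sub>2)" "idem (\<delta> \<odot> \<beta>\<^sub>2)"
    using idem_mult \<gamma> \<delta> u(1,2) by blast+
  moreover have "eval pa (Mul t u) = eval p (Mul t u) \<odot> (\<gamma> \<odot> \<alpha>\<^sub>2)"
    by (simp only: eval_term.simps t(3) u(3) P_def[symmetric] assoc move_\<alpha>)
  moreover have "eval pb (Mul t u) = eval p (Mul t u) \<odot> (\<delta> \<odot> \<beta>\<^sub>2)"
    by (simp only: eval_term.simps t(4) u(4) P_def[symmetric] assoc move_\<beta>)
  moreover have "eval pab (Mul t u) = eval p (Mul t u) \<odot> (\<gamma> \<odot> \<alpha>\<^sub>2 \<odot> (\<delta> \<odot> \<beta>\<^sub>2))"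
    by (simp only: eval_term.simps t(5) u(5) P_def[symmetric] assoc move_\<alpha> move_\<beta>
        idem_commute_left[OF u(1) \<delta>])
  ultimately show ?case by blast
next
  case (Inv t)
  then obtain \<alpha> \<beta> where t: "idem \<alpha>" "idem \<beta>" "eval pa t = eval p t \<odot> \<alpha>"
      "eval pb t = eval p t \<odot> \<beta>" "eval pab t = eval p t \<odot> (\<alpha> \<odot> \<beta>)"
    by auto
  define Q where "Q = iv (eval p t)"
  have "eval pa (Inv t) = Q \<odot> conjugate Q \<alpha>" "eval pb (Inv t) = Q \<odot> conjugate Q \<beta>"
    using t by (simp_all add: Q_def inv_mult inv_idem flip: idem_mult_conjugate)
  moreover have "eval pab (Inv t) = Q \<odot> (conjugate Q \<alpha> \<odot> conjugate Q \<beta>)"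
  proof -
    have "eval pab (Inv t) = \<alpha> \<odot> \<beta> \<odot> Q"
      using t by (simp add: Q_def inv_mult inv_idem idem_commute[of \<beta> \<alpha>])
    also have "\<dots> = Q \<odot> conjugate Q (\<alpha> \<odot> \<beta>)"
      using idem_mult[OF t(1,2)] by (rule idem_mult_conjugate)
    finally show ?thesis
      by (simp only: conjugate_mult[OF t(1)])
  qed
  ultimately show ?case
    using t(1,2) idem_conjugate by (auto simp: Q_def)
qed

lemma eval_term_at_product_point:
  assumes "term_vars t \<subseteq> V"
    and "idem_scaled_points V a b p pa pb pab"
  shows "eval pab t = eval pa t \<odot> (iv (eval pb t) \<odot> eval pb t)"
proof -
  obtain \<alpha> \<beta> where t: "idem \<alpha>" "idem \<beta>" "eval pa t = eval p t \<odot> \<alpha>"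
      "eval pb t = eval p t \<odot> \<beta>" "eval pab t = eval p t \<odot> (\<alpha> \<odot> \<beta>)"
    using eval_term_right_idem_factors[OF assms] by blast
  obtain P where P: "P = eval p t" by simp
  have "iv (eval pb t) \<odot> eval pb t = \<beta> \<odot> (\<beta> \<odot> (iv P \<odot> P))"
    using t(2,4) idem_commute[OF t(2) idem_inv_mult[of P]] by (simp add: P inv_mult inv_idem)
  also have "\<dots> = \<beta> \<odot> (iv P \<odot> P)"
    using t(2) by (rule idem_left)
  finally have "eval pa t \<odot> (iv (eval pb t) \<odot> eval pb t) = P \<odot> (\<alpha> \<odot> \<beta> \<odot> (iv P \<odot> P))"
    using t(3) by (simp add: P)
  also have "\<dots> = P \<odot> (iv P \<odot> P \<odot> (\<alpha> \<odot> \<beta>))"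
    by (simp only: idem_commute[OF idem_mult[OF t(1,2)] idem_inv_mult])
  also have "\<dots> = eval pab t"
    using t(5) by (simp add: P)
  finally show ?thesis by simp
qed

lemma solution_set_product_point:
  assumes vars: "\<forall>(t, u) \<in> E. term_vars t \<union> term_vars u \<subseteq> V"
    and coords: "idem_scaled_points V a b p pa pb pab"
    and "pa \<in> solution_set m iv n E" "pb \<in> solution_set m iv n E" "length pab = n"
  shows "pab \<in> solution_set m iv n E"
  unfolding solution_set_def
proof (safe)
  fix t u
  assume tu: "(t, u) \<in> E"
  then have "term_vars t \<subseteq> V" "term_vars u \<subseteq> V"
    using vars by auto
  have "eval pa t = eval pa u" "eval pb t = eval pb u"
    using assms(3,4) tu unfolding solution_set_def by auto
  with \<open>term_vars t \<subseteq> V\<close> \<open>term_vars u \<subseteq> V\<close> show "eval pab t = eval pab u"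
    using eval_term_at_product_point[OF _ coords] by metis
qed (fact assms(5))

lemma not_equational_domain_if_idem_less:
  assumes e: "idem e" and f: "idem f" and ef: "e \<odot> f = f" and "e \<noteq> f"
  shows "\<not> equational_domain m iv"
proof
  assume "equational_domain m iv"
  define Y\<^sub>1 where "Y\<^sub>1 = solution_set m iv 2 {(Var 0, Const e)}"
  define Y\<^sub>2 where "Y\<^sub>2 = solution_set m iv 2 {(Var 1, Const e)}"
  have "algebraic_set m iv 2 Y\<^sub>1"
    unfolding algebraic_set_def Y\<^sub>1_def by (intro exI[of _ "{(Var 0, Const e)}"]) auto
  moreover have "algebraic_set m iv 2 Y\<^sub>2"
    unfolding algebraic_set_def Y\<^sub>2_def by (intro exI[of _ "{(Var 1, Const e)}"]) auto
  ultimately have "algebraic_set m iv 2 (Y\<^sub>1 \<union> Y\<^sub>2)"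
    using \<open>equational_domain m iv\<close> unfolding equational_domain_def
    by (metis Union_insert Union_empty Un_empty_right finite.emptyI finite.insertI
        insert_not_empty insert_iff empty_iff)
  then obtain E where vars: "\<forall>(t, u) \<in> E. term_vars t \<union> term_vars u \<subseteq> {..<2}"
    and E: "Y\<^sub>1 \<union> Y\<^sub>2 = solution_set m iv 2 E"
    unfolding algebraic_set_def by auto
  have "[e, f] \<in> Y\<^sub>1" "[f, e] \<in> Y\<^sub>2"
    unfolding Y\<^sub>1_def Y\<^sub>2_def solution_set_def by auto
  then have ef_sol: "[e, f] \<in> solution_set m iv 2 E" and fe_sol: "[f, e] \<in> solution_set m iv 2 E"
    unfolding E[symmetric] by auto
  have "f \<odot> e = f"
    using idem_commute[OF e f] ef by simp
  then have coords: "idem_scaled_points {..<2} (nth [e, f]) (nth [f, e]) [e, e] [e, f] [f, e] [f, f]"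
    using e f ef by (auto simp: less_2_cases_iff)
  have "[f, f] \<in> solution_set m iv 2 E"
    using solution_set_product_point[OF vars coords ef_sol fe_sol] by simp
  then have "[f, f] \<in> Y\<^sub>1 \<union> Y\<^sub>2"
    unfolding E .
  with \<open>e \<noteq> f\<close> show False
    unfolding Y\<^sub>1_def Y\<^sub>2_def solution_set_def by auto
qed

text \<open>If \<open>e f = f\<close> forces \<open>e = f\<close>, then \<open>e = e f = f\<close> for any idempotents \<open>e, f\<close>; the unique
  idempotent \<open>s s\<inverse> = s\<inverse> s\<close> is an identity inverting every \<open>s\<close>.\<close>
lemma is_group_if_no_idem_less:
  assumes "\<And>e f. idem e \<Longrightarrow> idem f \<Longrightarrow> e \<odot> f = f \<Longrightarrow> e = f"
  shows "is_group m"
proof -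
  have idem_unique: "e = f" if "idem e" "idem f" for e f
    using assms idem_mult idem_commute idem_left that by metis
  obtain e where e: "\<And>s. s \<odot> iv s = e" "\<And>s. iv s \<odot> s = e"
    using idem_unique[OF idem_mult_inv] idem_unique[OF idem_inv_mult idem_mult_inv] by metis
  have "e \<odot> s = s \<and> s \<odot> e = s \<and> (\<exists>y. s \<odot> y = e \<and> y \<odot> s = e)" for s
    using e mult_inv_mult[of s] by (metis assoc)
  then show ?thesis
    unfolding is_group_def by auto
qed

end

theorem theorem3:
  fixes m :: "'a \<Rightarrow> 'a \<Rightarrow> 'a" and iv :: "'a \<Rightarrow> 'a"
  assumes "inverse_semigroup m iv"
    and "equational_domain m iv"
  shows "is_group m"
proof -
  interpret inv_semigroup m iv
    by unfold_locales (rule assms(1))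
  show ?thesis
    using is_group_if_no_idem_less not_equational_domain_if_idem_less assms(2) by blast
qed

end
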